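(* Let $G$ be a finite induced regular group and let $x\in G$ be such that $C_G(x)$ is a maximal centralizer in $G$. If there exists an element $y\in C_G(x)\setminus\beta_G(x)$ such that the order of $yZ(G)$ in $G/Z(G)$ is a prime $p\neq 2$, then $(\beta_G(x)\cup Z(G))/Z(G)$ is an elementary $p$-group.
   Context: For a finite group $G$, $C_G(x)$ denotes the centralizer of $x\in G$ and $Z(G)$ the center; $\beta_G(x)=\{y\in G\mid C_G(y)=C_G(x)\}$. The non-centralizer graph $\Upsilon_G$ is the simple graph with vertex set $G$ in which two distinct vertices $x,y$ are adjacent iff $C_G(x)\neq C_G(y)$; the induced non-centralizer graph $\Upsilon_{G\setminus Z(G)}$ is its induced subgraph on $G\setminus Z(G)$. $G$ is called induced regular if $\Upsilon_{G\setminus Z(G)}$ is a regular graph. A centralizer $C_G(x)$ is called maximal if it is not contained in any other proper centralizer of $G$. A group is called an elementary $p$-group if every non-identity element has order exactly $p$ (it need not be abelian). *)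

theory Defs
  imports "HOL-Algebra.Algebra"
begin

definition centralizer :: "('a, 'b) monoid_scheme \<Rightarrow> 'a \<Rightarrow> 'a set" where
  "centralizer G x = {y \<in> carrier G. y \<otimes>\<^bsub>G\<^esub> x = x \<otimes>\<^bsub>G\<^esub> y}"

definition center :: "('a, 'b) monoid_scheme \<Rightarrow> 'a set" where
  "center G = {z \<in> carrier G. \<forall>g \<in> carrier G. z \<otimes>\<^bsub>G\<^esub> g = g \<otimes>\<^bsub>G\<^esub> z}"

definition beta :: "('a, 'b) monoid_scheme \<Rightarrow> 'a \<Rightarrow> 'a set" where
  "beta G x = {y \<in> carrier G. centralizer G y = centralizer G x}"

definition noncent_adj :: "('a, 'b) monoid_scheme \<Rightarrow> 'a \<Rightarrow> 'a \<Rightarrow> bool" where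
  "noncent_adj G x y \<longleftrightarrow> x \<noteq> y \<and> centralizer G x \<noteq> centralizer G y"

definition induced_vertices :: "('a, 'b) monoid_scheme \<Rightarrow> 'a set" where
  "induced_vertices G = carrier G - center G"

definition induced_degree :: "('a, 'b) monoid_scheme \<Rightarrow> 'a \<Rightarrow> nat" where
  "induced_degree G v = card {w \<in> induced_vertices G. noncent_adj G v w}"

definition induced_regular :: "('a, 'b) monoid_scheme \<Rightarrow> bool" where
  "induced_regular G \<longleftrightarrow>
     (\<exists>k. \<forall>v \<in> induced_vertices G. induced_degree G v = k)"

definition maximal_centralizer :: "('a, 'b) monoid_scheme \<Rightarrow> 'a \<Rightarrow> bool" where
  "maximal_centralizer G x \<longleftrightarrow> x \<in> carrier G \<and> centralizer G x \<noteq> carrier G \<and>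
     (\<forall>y \<in> carrier G. centralizer G y \<noteq> carrier G \<longrightarrow>
        centralizer G x \<subseteq> centralizer G y \<longrightarrow> centralizer G y = centralizer G x)"

definition elementary_p_group :: "('a, 'b) monoid_scheme \<Rightarrow> nat \<Rightarrow> bool" where
  "elementary_p_group H p \<longleftrightarrow> group H \<and>
     (\<forall>h \<in> carrier H. h \<noteq> \<one>\<^bsub>H\<^esub> \<longrightarrow> group.ord H h = p)"

end

theory Submission
  imports Defs
begin

(*
  Write A = beta(x) \<union> Z(G).  By maximality of C(x), A is the subgroup of all a with
  C(x) \<subseteq> C(a); so A \<subseteq> C(x), and C(a^p) = C(x) whenever a \<in> A and a^p \<notin> Z(G).
  It suffices to show a^p \<in> Z(G) for all a \<in> A.  Otherwise let S be the set of a \<in> A with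
  a^p \<notin> Z(G) and fix a \<in> S.  Multiplication by a maps A - S into S, hence
  |beta(x)| = |A| - |Z(G)| < 2|S|.  On the other hand, an element commuting with b y (b \<in> S)
  commutes with (b y)^p = b^p y^p, hence with b^p, hence lies in C(x); so the elements
  b y and b y^-1 all have centralizer C(x) \<inter> C(y) = C(a y), and there are 2|S| of them
  because y \<notin> A while y^p \<in> A and p is odd.  As the degree of a vertex v of the induced
  non-centralizer graph is |G - Z(G)| - |beta(v)|, regularity gives |beta(a y)| = |beta(x)|,
  a contradiction.
*)

context group begin

lemma centralizer_subset_carrier: "centralizer G a \<subseteq> carrier G"
  unfolding centralizer_def by auto

lemma centralizer_sym:
  "a \<in> carrier G \<Longrightarrow> g \<in> carrier G \<Longrightarrow> a \<in> centralizer G g \<longleftrightarrow> g \<in> centralizer G a"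
  unfolding centralizer_def by auto

lemma center_iff_centralizer_eq_carrier:
  "z \<in> center G \<longleftrightarrow> z \<in> carrier G \<and> centralizer G z = carrier G"
  unfolding center_def centralizer_def by (auto simp: set_eq_iff) metis

lemma inv_commute:
  assumes "a \<in> carrier G" "x \<in> carrier G" "a \<otimes> x = x \<otimes> a"
  shows "inv a \<otimes> x = x \<otimes> inv a"
proof -
  have "inv a \<otimes> x = inv a \<otimes> (x \<otimes> a) \<otimes> inv a"
    using assms(1,2) by (simp add: m_assoc)
  also have "\<dots> = inv a \<otimes> (a \<otimes> x) \<otimes> inv a"
    using assms by simp
  also have "\<dots> = x \<otimes> inv a"
    using assms(1,2) by (simp add: m_assoc[symmetric])
  finally show ?thesis .
qed

lemma subgroup_centralizer:
  assumes "x \<in> carrier G"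
  shows "subgroup (centralizer G x) G"
proof (rule subgroupI)
  show "centralizer G x \<subseteq> carrier G"
    by (rule centralizer_subset_carrier)
  have "\<one> \<in> centralizer G x"
    using assms by (simp add: centralizer_def)
  then show "centralizer G x \<noteq> {}"
    by blast
next
  fix a b
  assume "a \<in> centralizer G x" "b \<in> centralizer G x"
  then have a: "a \<in> carrier G" "a \<otimes> x = x \<otimes> a" and b: "b \<in> carrier G" "b \<otimes> x = x \<otimes> b"
    unfolding centralizer_def by auto
  show "inv a \<in> centralizer G x"
    using a assms inv_commute unfolding centralizer_def by simp
  have "a \<otimes> b \<otimes> x = x \<otimes> (a \<otimes> b)"
    using a b assms by (simp add: m_assoc) (simp add: m_assoc[symmetric])
  then show "a \<otimes> b \<in> centralizer G x"
    using a b unfolding centralizer_def by simp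
qed

lemma centralizer_Int_subset_mult:
  assumes "a \<in> carrier G" "b \<in> carrier G"
  shows "centralizer G a \<inter> centralizer G b \<subseteq> centralizer G (a \<otimes> b)"
proof
  fix g
  assume g_ab: "g \<in> centralizer G a \<inter> centralizer G b"
  then have g: "g \<in> carrier G"
    using centralizer_subset_carrier by blast
  have "a \<in> centralizer G g" "b \<in> centralizer G g"
    using g_ab g assms centralizer_sym by blast+
  then have "a \<otimes> b \<in> centralizer G g"
    using subgroup.m_closed[OF subgroup_centralizer[OF g]] by blast
  then show "g \<in> centralizer G (a \<otimes> b)"
    using g assms centralizer_sym m_closed by blast
qed

lemma centralizer_inv: "a \<in> carrier G \<Longrightarrow> centralizer G (inv a) = centralizer G a"
proof -
  have subset_inv: "centralizer G b \<subseteq> centralizer G (inv b)" if b: "b \<in> carrier G" for b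
  proof
    fix g
    assume g_b: "g \<in> centralizer G b"
    then have g: "g \<in> carrier G"
      using centralizer_subset_carrier by blast
    have "inv b \<in> centralizer G g"
      using subgroup.m_inv_closed[OF subgroup_centralizer[OF g]] g_b g b centralizer_sym by blast
    then show "g \<in> centralizer G (inv b)"
      using g b centralizer_sym inv_closed by blast
  qed
  assume "a \<in> carrier G"
  then show ?thesis
    using subset_inv[of a] subset_inv[of "inv a"] by simp
qed

lemma centralizer_subset_pow: "a \<in> carrier G \<Longrightarrow> centralizer G a \<subseteq> centralizer G (a [^] (n::nat))"
proof (induction n)
  case 0
  show ?case
    by (auto simp: centralizer_def)
next
  case (Suc n)
  then have "centralizer G a \<subseteq> centralizer G (a [^] n) \<inter> centralizer G a"
    by blast
  also have "\<dots> \<subseteq> centralizer G (a [^] Suc n)"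
    using centralizer_Int_subset_mult Suc.prems by simp
  finally show ?case .
qed

lemma centralizer_mult_center:
  assumes a: "a \<in> carrier G" and z: "z \<in> center G"
  shows "centralizer G (a \<otimes> z) = centralizer G a"
proof
  have z_carrier: "z \<in> carrier G" and Cz: "centralizer G z = carrier G"
    using z center_iff_centralizer_eq_carrier by blast+
  then have Cz_inv: "centralizer G (inv z) = carrier G"
    using centralizer_inv by simp
  have "centralizer G (a \<otimes> z) = centralizer G (a \<otimes> z) \<inter> centralizer G (inv z)"
    by (simp add: Cz_inv Int_absorb2 centralizer_subset_carrier)
  also have "\<dots> \<subseteq> centralizer G (a \<otimes> z \<otimes> inv z)"
    using a z_carrier by (intro centralizer_Int_subset_mult) simp_all
  finally show "centralizer G (a \<otimes> z) \<subseteq> centralizer G a"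
    using a z_carrier by (simp add: m_assoc)
  have "centralizer G a = centralizer G a \<inter> centralizer G z"
    by (simp add: Cz Int_absorb2 centralizer_subset_carrier)
  also have "\<dots> \<subseteq> centralizer G (a \<otimes> z)"
    using a z_carrier by (rule centralizer_Int_subset_mult)
  finally show "centralizer G a \<subseteq> centralizer G (a \<otimes> z)" .
qed

lemma subgroup_centralizing:
  assumes "C \<subseteq> carrier G"
  shows "subgroup {a \<in> carrier G. C \<subseteq> centralizer G a} G"
proof (rule subgroupI)
  have "centralizer G \<one> = carrier G"
    by (auto simp: centralizer_def)
  then show "{a \<in> carrier G. C \<subseteq> centralizer G a} \<noteq> {}"
    using assms by blast
next
  fix a b
  assume "a \<in> {a \<in> carrier G. C \<subseteq> centralizer G a}" "b \<in> {a \<in> carrier G. C \<subseteq> centralizer G a}"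
  then have a: "a \<in> carrier G" "C \<subseteq> centralizer G a" and b: "b \<in> carrier G" "C \<subseteq> centralizer G b"
    by auto
  show "inv a \<in> {a \<in> carrier G. C \<subseteq> centralizer G a}"
    using a centralizer_inv by simp
  have "C \<subseteq> centralizer G (a \<otimes> b)"
    using a b centralizer_Int_subset_mult by blast
  then show "a \<otimes> b \<in> {a \<in> carrier G. C \<subseteq> centralizer G a}"
    using a b by simp
qed auto

lemma normal_center: "center G \<lhd> G"
proof (rule normalI)
  have "center G = {a \<in> carrier G. carrier G \<subseteq> centralizer G a}"
    unfolding center_def centralizer_def by (auto simp: subset_iff)
  then show "subgroup (center G) G"
    using subgroup_centralizing by simp
  show "\<forall>g \<in> carrier G. center G #> g = g <# center G"
    unfolding r_coset_def l_coset_def center_def by force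
qed

lemma centralizer_mult_eq_Int:
  assumes a: "a \<in> carrier G" and v: "v \<in> carrier G" and comm: "a \<otimes> v = v \<otimes> a"
    and v_pow: "v [^] (n::nat) \<in> center G"
    and a_pow: "centralizer G (a [^] n) \<subseteq> centralizer G a"
  shows "centralizer G (a \<otimes> v) = centralizer G (a [^] n) \<inter> centralizer G v"
proof
  have "centralizer G (a [^] n) \<inter> centralizer G v \<subseteq> centralizer G a \<inter> centralizer G v"
    using a_pow by blast
  also have "\<dots> \<subseteq> centralizer G (a \<otimes> v)"
    using a v by (rule centralizer_Int_subset_mult)
  finally show "centralizer G (a [^] n) \<inter> centralizer G v \<subseteq> centralizer G (a \<otimes> v)" .
next
  have "centralizer G (a \<otimes> v) \<subseteq> centralizer G ((a \<otimes> v) [^] n)"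
    using a v by (intro centralizer_subset_pow m_closed)
  also have "(a \<otimes> v) [^] n = a [^] n \<otimes> v [^] n"
    using comm a v by (rule pow_mult_distrib)
  also have "centralizer G (a [^] n \<otimes> v [^] n) = centralizer G (a [^] n)"
    using a v_pow by (simp add: centralizer_mult_center)
  finally have Cav: "centralizer G (a \<otimes> v) \<subseteq> centralizer G (a [^] n)" .
  then have "centralizer G (a \<otimes> v) \<subseteq> centralizer G (inv a) \<inter> centralizer G (a \<otimes> v)"
    using a a_pow by (simp add: centralizer_inv)
  also have "\<dots> \<subseteq> centralizer G (inv a \<otimes> (a \<otimes> v))"
    using a v by (intro centralizer_Int_subset_mult) simp_all
  also have "inv a \<otimes> (a \<otimes> v) = v"
    using a v by (simp add: m_assoc[symmetric])
  finally show "centralizer G (a \<otimes> v) \<subseteq> centralizer G (a [^] n) \<inter> centralizer G v"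
    using Cav by blast
qed

lemma subgroup_nat_pow_closed: "subgroup H G \<Longrightarrow> h \<in> H \<Longrightarrow> h [^] (n::nat) \<in> H"
  using subgroup_int_pow_closed[of H h "int n"] by (simp add: int_pow_int)

lemma ord_carrier_update:
  assumes "subgroup K G"
  shows "group.ord (G\<lparr>carrier := K\<rparr>) h = ord h"
  unfolding group.ord_def[OF subgroup_imp_group[OF assms]] ord_def nat_pow_consistent[symmetric]
  by simp

lemma card_pow_mem_le_card_pow_not_mem:
  assumes H: "subgroup H G" and N: "subgroup N G" and "finite H"
    and a: "a \<in> H" "a [^] (n::nat) \<notin> N" and central: "\<And>h. h \<in> H \<Longrightarrow> a \<otimes> h = h \<otimes> a"
  shows "card {h \<in> H. h [^] n \<in> N} \<le> card {h \<in> H. h [^] n \<notin> N}"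
proof (rule card_inj_on_le[where f = "(\<otimes>) a"])
  have a_carrier: "a \<in> carrier G"
    using subgroup.mem_carrier[OF H a(1)] .
  have "{h \<in> H. h [^] n \<in> N} \<subseteq> carrier G"
    using subgroup.subset[OF H] by blast
  then show "inj_on ((\<otimes>) a) {h \<in> H. h [^] n \<in> N}"
    by (rule inj_on_subset[OF inj_on_cmult[OF a_carrier]])
  show "finite {h \<in> H. h [^] n \<notin> N}"
    using \<open>finite H\<close> by simp
  show "(\<otimes>) a ` {h \<in> H. h [^] n \<in> N} \<subseteq> {h \<in> H. h [^] n \<notin> N}"
  proof (rule image_subsetI)
    fix h
    assume "h \<in> {h \<in> H. h [^] n \<in> N}"
    then have h: "h \<in> H" "h [^] n \<in> N"
      by simp_all
    have h_carrier: "h \<in> carrier G"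
      using subgroup.mem_carrier[OF H h(1)] .
    have "(a \<otimes> h) [^] n \<notin> N"
    proof
      assume ah: "(a \<otimes> h) [^] n \<in> N"
      have "(a \<otimes> h) [^] n = a [^] n \<otimes> h [^] n"
        using central[OF h(1)] a_carrier h_carrier by (rule pow_mult_distrib)
      then have "a [^] n = (a \<otimes> h) [^] n \<otimes> inv (h [^] n)"
        using a_carrier h_carrier by (simp add: m_assoc)
      also have "\<dots> \<in> N"
        using subgroup.m_closed[OF N ah subgroup.m_inv_closed[OF N h(2)]] .
      finally show False
        using a(2) by contradiction
    qed
    then show "a \<otimes> h \<in> {h \<in> H. h [^] n \<notin> N}"
      using subgroup.m_closed[OF H a(1) h(1)] by simp
  qed
qed

lemma mem_subgroup_of_sq_odd_pow:
  assumes H: "subgroup H G" and y: "y \<in> carrier G"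
    and "y \<otimes> y \<in> H" "y [^] (n::nat) \<in> H" "odd n"
  shows "y \<in> H"
proof -
  obtain k where n: "n = Suc (2 * k)"
    using \<open>odd n\<close> oddE by fastforce
  have "y \<otimes> y = y [^] (2::nat)"
    using y by (simp add: numeral_2_eq_2)
  then have "(y \<otimes> y) [^] k = y [^] (2 * k)"
    using y by (simp add: nat_pow_pow)
  then have "y [^] n = (y \<otimes> y) [^] k \<otimes> y"
    using n by simp
  then have "y = inv ((y \<otimes> y) [^] k) \<otimes> y [^] n"
    using y by (simp add: m_assoc[symmetric])
  also have "\<dots> \<in> H"
    using subgroup.m_closed[OF H subgroup.m_inv_closed[OF H subgroup_nat_pow_closed[OF H assms(3)]] assms(4)] .
  finally show ?thesis .
qed

lemma card_translates_Un:
  assumes H: "subgroup H G" and S: "S \<subseteq> H" "finite S"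
    and y: "y \<in> carrier G" "y \<notin> H" "y [^] (n::nat) \<in> H" "odd n"
  shows "card ((\<lambda>a. a \<otimes> y) ` S \<union> (\<lambda>a. a \<otimes> inv y) ` S) = 2 * card S"
proof -
  have S_carrier: "S \<subseteq> carrier G"
    using S(1) subgroup.subset[OF H] by blast
  have card_translate: "card ((\<lambda>a. a \<otimes> c) ` S) = card S" if "c \<in> carrier G" for c
    using inj_on_subset[OF inj_on_multc[OF that] S_carrier] by (rule card_image)
  have "(\<lambda>a. a \<otimes> y) ` S \<inter> (\<lambda>a. a \<otimes> inv y) ` S = {}"
  proof (rule ccontr)
    assume "(\<lambda>a. a \<otimes> y) ` S \<inter> (\<lambda>a. a \<otimes> inv y) ` S \<noteq> {}"
    then obtain a b where ab: "a \<in> S" "b \<in> S" "a \<otimes> y = b \<otimes> inv y"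
      by auto
    then have a: "a \<in> carrier G" and b: "b \<in> carrier G"
      using S_carrier by auto
    have "a \<otimes> (y \<otimes> y) = b"
      using ab(3) a b y(1) by (simp add: m_assoc[symmetric]) (simp add: m_assoc)
    then have "y \<otimes> y = inv a \<otimes> b"
      using a b y(1) by (simp add: inv_solve_left)
    also have "inv a \<otimes> b \<in> H"
      using S(1) ab(1,2) by (intro subgroup.m_closed subgroup.m_inv_closed H) auto
    finally have "y \<otimes> y \<in> H" .
    then have "y \<in> H"
      using mem_subgroup_of_sq_odd_pow H y(1,3,4) by blast
    with y(2) show False ..
  qed
  then have "card ((\<lambda>a. a \<otimes> y) ` S \<union> (\<lambda>a. a \<otimes> inv y) ` S)
      = card ((\<lambda>a. a \<otimes> y) ` S) + card ((\<lambda>a. a \<otimes> inv y) ` S)"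
    using S(2) by (intro card_Un_disjoint) simp_all
  then show ?thesis
    using card_translate y(1) by simp
qed

lemma induced_vertices_iff:
  "v \<in> induced_vertices G \<longleftrightarrow> v \<in> carrier G \<and> centralizer G v \<noteq> carrier G"
  unfolding induced_vertices_def using center_iff_centralizer_eq_carrier by blast

lemma beta_subset_induced_vertices:
  assumes "v \<in> induced_vertices G"
  shows "beta G v \<subseteq> induced_vertices G"
proof
  fix w
  assume "w \<in> beta G v"
  then have "w \<in> carrier G" "centralizer G w = centralizer G v"
    unfolding beta_def by simp_all
  with assms show "w \<in> induced_vertices G"
    unfolding induced_vertices_iff by simp
qed

lemma induced_degree_eq:
  assumes "finite (carrier G)" and v: "v \<in> induced_vertices G"
  shows "induced_degree G v = card (induced_vertices G) - card (beta G v)"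
proof -
  have "{w \<in> induced_vertices G. noncent_adj G v w} = induced_vertices G - beta G v"
    using v unfolding noncent_adj_def beta_def induced_vertices_def by auto
  moreover have "finite (induced_vertices G)"
    using assms(1) unfolding induced_vertices_def by simp
  ultimately show ?thesis
    unfolding induced_degree_def
    using card_Diff_subset[OF finite_subset beta_subset_induced_vertices[OF v]]
      beta_subset_induced_vertices[OF v] by simp
qed

lemma induced_regular_card_beta_eq:
  assumes fin: "finite (carrier G)" and "induced_regular G"
    and u: "u \<in> induced_vertices G" and v: "v \<in> induced_vertices G"
  shows "card (beta G u) = card (beta G v)"
proof -
  have finite_V: "finite (induced_vertices G)"
    using fin unfolding induced_vertices_def by simp
  have "induced_degree G u = induced_degree G v"
    using \<open>induced_regular G\<close> u v unfolding induced_regular_def by metis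
  then have "card (induced_vertices G) - card (beta G u) = card (induced_vertices G) - card (beta G v)"
    using induced_degree_eq[OF fin u] induced_degree_eq[OF fin v] by simp
  moreover have "card (beta G u) \<le> card (induced_vertices G)" "card (beta G v) \<le> card (induced_vertices G)"
    using card_mono[OF finite_V beta_subset_induced_vertices] u v by blast+
  ultimately show ?thesis
    by linarith
qed

lemma beta_Un_center_subset_centralizer:
  "x \<in> carrier G \<Longrightarrow> beta G x \<union> center G \<subseteq> centralizer G x"
  unfolding beta_def center_def centralizer_def by auto

lemma maximal_centralizer_beta_Un_center:
  assumes "maximal_centralizer G x"
  shows "beta G x \<union> center G = {a \<in> carrier G. centralizer G x \<subseteq> centralizer G a}"
proof (intro equalityI subsetI)
  fix a
  assume "a \<in> beta G x \<union> center G"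
  then have "a \<in> carrier G" "centralizer G a = centralizer G x \<or> centralizer G a = carrier G"
    using center_iff_centralizer_eq_carrier[of a] unfolding beta_def by blast+
  then show "a \<in> {a \<in> carrier G. centralizer G x \<subseteq> centralizer G a}"
    using centralizer_subset_carrier[of x] by auto
next
  fix a
  assume "a \<in> {a \<in> carrier G. centralizer G x \<subseteq> centralizer G a}"
  then have a: "a \<in> carrier G" "centralizer G x \<subseteq> centralizer G a"
    by auto
  have maximal: "\<forall>y \<in> carrier G. centralizer G y \<noteq> carrier G \<longrightarrow>
      centralizer G x \<subseteq> centralizer G y \<longrightarrow> centralizer G y = centralizer G x"
    using assms unfolding maximal_centralizer_def by (elim conjE)
  show "a \<in> beta G x \<union> center G"
  proof (cases "centralizer G a = carrier G")
    case True
    then have "a \<in> center G"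
      unfolding center_iff_centralizer_eq_carrier using a(1) by simp
    then show ?thesis ..
  next
    case False
    then have "centralizer G a = centralizer G x"
      using maximal a by meson
    then show ?thesis
      using a(1) unfolding beta_def by simp
  qed
qed

lemma subgroup_beta_Un_center:
  "maximal_centralizer G x \<Longrightarrow> subgroup (beta G x \<union> center G) G"
  using subgroup_centralizing[OF centralizer_subset_carrier]
  by (simp add: maximal_centralizer_beta_Un_center)

lemma centralizer_mult_beta:
  assumes max: "maximal_centralizer G x"
    and a: "a \<in> beta G x \<union> center G" "a [^] (n::nat) \<notin> center G"
    and v: "v \<in> centralizer G x" "v [^] n \<in> center G"
  shows "centralizer G (a \<otimes> v) = centralizer G x \<inter> centralizer G v"
proof -
  have a_carrier: "a \<in> carrier G" and Cx_Ca: "centralizer G x \<subseteq> centralizer G a"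
    using a(1) unfolding maximal_centralizer_beta_Un_center[OF max] by simp_all
  have v_carrier: "v \<in> carrier G"
    using v(1) centralizer_subset_carrier by blast
  have "a [^] n \<in> beta G x \<union> center G"
    using subgroup_nat_pow_closed[OF subgroup_beta_Un_center[OF max] a(1)] .
  then have Ca_pow: "centralizer G (a [^] n) = centralizer G x"
    using a(2) unfolding beta_def by blast
  have "v \<in> centralizer G a"
    using v(1) Cx_Ca by blast
  then have "a \<otimes> v = v \<otimes> a"
    unfolding centralizer_def by simp
  from centralizer_mult_eq_Int[OF a_carrier v_carrier this v(2)] show ?thesis
    using Ca_pow Cx_Ca by simp
qed

lemma card_beta_lt:
  assumes fin: "finite (carrier G)" and max: "maximal_centralizer G x"
    and a: "a \<in> beta G x \<union> center G" "a [^] (n::nat) \<notin> center G"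
  shows "card (beta G x) < 2 * card {b \<in> beta G x \<union> center G. b [^] n \<notin> center G}"
proof -
  let ?A = "beta G x \<union> center G"
  have A: "subgroup ?A G"
    using max by (rule subgroup_beta_Un_center)
  have finite_A: "finite ?A"
    using fin subgroup.subset[OF A] by (rule finite_subset[rotated])
  have x: "x \<in> carrier G" and Cx: "centralizer G x \<noteq> carrier G"
    using max unfolding maximal_centralizer_def by simp_all
  have "a \<otimes> b = b \<otimes> a" if "b \<in> ?A" for b
  proof -
    have "b \<in> centralizer G x"
      using that beta_Un_center_subset_centralizer[OF x] by blast
    then have "b \<in> centralizer G a"
      using a(1) unfolding maximal_centralizer_beta_Un_center[OF max] by blast
    then show ?thesis
      unfolding centralizer_def by simp
  qed
  then have "card {b \<in> ?A. b [^] n \<in> center G} \<le> card {b \<in> ?A. b [^] n \<notin> center G}"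
    using card_pow_mem_le_card_pow_not_mem[OF A normal_imp_subgroup[OF normal_center] finite_A a]
    by blast
  moreover have "card ?A = card {b \<in> ?A. b [^] n \<in> center G} + card {b \<in> ?A. b [^] n \<notin> center G}"
    using card_Int_Diff[OF finite_A, of "{b. b [^] n \<in> center G}"] by (simp add: Int_def set_diff_eq)
  moreover have "card ?A = card (beta G x) + card (center G)"
  proof (rule card_Un_disjoint)
    show "finite (beta G x)" "finite (center G)"
      using finite_A by simp_all
    show "beta G x \<inter> center G = {}"
      using Cx center_iff_centralizer_eq_carrier unfolding beta_def by blast
  qed
  moreover have "card (center G) > 0"
    using finite_A subgroup.one_closed[OF normal_imp_subgroup[OF normal_center]] card_gt_0_iff by blast
  ultimately show ?thesis
    by linarith
qed

lemma card_beta_mult_ge: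
  assumes fin: "finite (carrier G)" and max: "maximal_centralizer G x"
    and y: "y \<in> centralizer G x" "y \<notin> beta G x \<union> center G" "y [^] (n::nat) \<in> center G" "odd n"
    and a: "a \<in> beta G x \<union> center G" "a [^] n \<notin> center G"
  shows "2 * card {b \<in> beta G x \<union> center G. b [^] n \<notin> center G} \<le> card (beta G (a \<otimes> y))"
proof -
  let ?A = "beta G x \<union> center G"
  let ?S = "{b \<in> ?A. b [^] n \<notin> center G}"
  have A: "subgroup ?A G"
    using max by (rule subgroup_beta_Un_center)
  have finite_S: "finite ?S"
    using fin subgroup.subset[OF A] by (auto intro: finite_subset[rotated])
  have y_carrier: "y \<in> carrier G"
    using y(1) centralizer_subset_carrier by blast
  have x: "x \<in> carrier G"
    using max unfolding maximal_centralizer_def by simp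
  have inv_y: "inv y \<in> centralizer G x" "inv y [^] n \<in> center G"
    using subgroup.m_inv_closed[OF subgroup_centralizer[OF x] y(1)]
      subgroup.m_inv_closed[OF normal_imp_subgroup[OF normal_center] y(3)]
    by (simp_all add: nat_pow_inv y_carrier)
  have translates: "(\<lambda>b. b \<otimes> y) ` ?S \<union> (\<lambda>b. b \<otimes> inv y) ` ?S \<subseteq> beta G (a \<otimes> y)"
  proof -
    have Cay: "centralizer G (a \<otimes> y) = centralizer G x \<inter> centralizer G y"
      using centralizer_mult_beta[OF max a y(1,3)] .
    have "b \<otimes> y \<in> beta G (a \<otimes> y)" "b \<otimes> inv y \<in> beta G (a \<otimes> y)" if b: "b \<in> ?S" for b
    proof -
      have b_carrier: "b \<in> carrier G"
        using b subgroup.subset[OF A] by blast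
      show "b \<otimes> y \<in> beta G (a \<otimes> y)"
        using centralizer_mult_beta[OF max _ _ y(1,3)] b b_carrier y_carrier Cay
        unfolding beta_def by simp
      show "b \<otimes> inv y \<in> beta G (a \<otimes> y)"
        using centralizer_mult_beta[OF max _ _ inv_y] b b_carrier y_carrier Cay
        unfolding beta_def by (simp add: centralizer_inv)
    qed
    then show ?thesis
      by blast
  qed
  have "y \<notin> ?A" "y [^] n \<in> ?A"
    using y(2,3) by simp_all
  then have "card ((\<lambda>b. b \<otimes> y) ` ?S \<union> (\<lambda>b. b \<otimes> inv y) ` ?S) = 2 * card ?S"
    using card_translates_Un[OF A _ finite_S y_carrier _ _ y(4)] by blast
  moreover have "card ((\<lambda>b. b \<otimes> y) ` ?S \<union> (\<lambda>b. b \<otimes> inv y) ` ?S) \<le> card (beta G (a \<otimes> y))"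
    using translates fin unfolding beta_def by (intro card_mono) simp_all
  ultimately show ?thesis
    by simp
qed

lemma pow_mem_center_if_induced_regular:
  assumes fin: "finite (carrier G)" and reg: "induced_regular G" and max: "maximal_centralizer G x"
    and y: "y \<in> centralizer G x" "y \<notin> beta G x \<union> center G" "y [^] (n::nat) \<in> center G" "odd n"
    and a: "a \<in> beta G x \<union> center G"
  shows "a [^] n \<in> center G"
proof (rule ccontr)
  assume a_pow: "a [^] n \<notin> center G"
  have x: "x \<in> carrier G" "centralizer G x \<noteq> carrier G"
    using max unfolding maximal_centralizer_def by simp_all
  have "a \<otimes> y \<in> carrier G"
    using a y(1) subgroup.subset[OF subgroup_beta_Un_center[OF max]] centralizer_subset_carrier by blast
  moreover have "centralizer G (a \<otimes> y) \<subseteq> centralizer G x"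
    using centralizer_mult_beta[OF max a a_pow y(1,3)] by blast
  ultimately have "a \<otimes> y \<in> induced_vertices G"
    using x(2) centralizer_subset_carrier unfolding induced_vertices_iff by blast
  moreover have "x \<in> induced_vertices G"
    using x unfolding induced_vertices_iff by simp
  ultimately have "card (beta G (a \<otimes> y)) = card (beta G x)"
    using fin reg by (rule induced_regular_card_beta_eq[rotated 2])
  with card_beta_lt[OF fin max a a_pow] card_beta_mult_ge[OF fin max y a a_pow]
  show False
    by linarith
qed

end

context normal begin

lemma FactGroup_pow_eq_one_iff:
  assumes "a \<in> carrier G"
  shows "(H #> a) [^]\<^bsub>G Mod H\<^esub> (n::nat) = \<one>\<^bsub>G Mod H\<^esub> \<longleftrightarrow> a [^] n \<in> H"
  using FactGroup_pow[OF assms] coset_join1[OF _ nat_pow_closed[OF assms] subgroup_axioms]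
    rcos_const[OF is_group]
  by auto

lemma pow_ord_FactGroup_mem:
  assumes "a \<in> carrier G"
  shows "a [^] group.ord (G Mod H) (H #> a) \<in> H"
proof -
  interpret Q: group "G Mod H"
    by (rule factorgroup_is_group)
  have "H #> a \<in> carrier (G Mod H)"
    using assms by (simp add: carrier_FactGroup)
  then show ?thesis
    using Q.pow_ord_eq_1 FactGroup_pow_eq_one_iff[OF assms] by blast
qed

lemma ord_FactGroup_eq_1_iff:
  assumes "a \<in> carrier G"
  shows "group.ord (G Mod H) (H #> a) = 1 \<longleftrightarrow> a \<in> H"
proof -
  interpret Q: group "G Mod H"
    by (rule factorgroup_is_group)
  have "H #> a \<in> carrier (G Mod H)"
    using assms by (simp add: carrier_FactGroup)
  then show ?thesis
    using Q.ord_eq_1 coset_join1[OF _ assms subgroup_axioms] rcos_const[OF is_group] by auto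
qed

lemma elementary_p_group_FactGroup_image:
  assumes K: "subgroup K G" and p: "Factorial_Ring.prime (p::nat)"
    and pow: "\<And>a. a \<in> K \<Longrightarrow> a [^] p \<in> H"
  shows "elementary_p_group ((G Mod H)\<lparr>carrier := (\<lambda>a. H #> a) ` K\<rparr>) p"
proof -
  interpret Q: group "G Mod H"
    by (rule factorgroup_is_group)
  have "group_hom G (G Mod H) (\<lambda>a. H #> a)"
    by (intro group_hom.intro group_hom_axioms.intro is_group Q.is_group r_coset_hom_Mod)
  then have img: "subgroup ((\<lambda>a. H #> a) ` K) (G Mod H)"
    using K by (rule group_hom.subgroup_img_is_subgroup)
  show ?thesis
    unfolding elementary_p_group_def
  proof (intro conjI ballI impI)
    show "group ((G Mod H)\<lparr>carrier := (\<lambda>a. H #> a) ` K\<rparr>)"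
      using img by (rule Q.subgroup_imp_group)
    fix h
    assume "h \<in> carrier ((G Mod H)\<lparr>carrier := (\<lambda>a. H #> a) ` K\<rparr>)"
      and h_ne: "h \<noteq> \<one>\<^bsub>(G Mod H)\<lparr>carrier := (\<lambda>a. H #> a) ` K\<rparr>\<^esub>"
    then obtain a where a: "a \<in> K" "h = H #> a"
      by auto
    have a_carrier: "a \<in> carrier G"
      using subgroup.mem_carrier[OF K a(1)] .
    have h_carrier: "h \<in> carrier (G Mod H)"
      using a_carrier a(2) by (simp add: carrier_FactGroup)
    have "Q.ord h dvd p"
      using pow[OF a(1)] a(2) FactGroup_pow_eq_one_iff[OF a_carrier] Q.pow_eq_id[OF h_carrier] by simp
    moreover have "Q.ord h \<noteq> 1"
      using h_ne Q.ord_eq_1[OF h_carrier] by simp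
    ultimately have "Q.ord h = p"
      using p prime_nat_iff by blast
    then show "group.ord ((G Mod H)\<lparr>carrier := (\<lambda>a. H #> a) ` K\<rparr>) h = p"
      using Q.ord_carrier_update[OF img] by simp
  qed
qed

end

theorem proposition3p4:
  fixes G (structure) and x y :: 'a and p :: nat
  assumes "group G"
    and "finite (carrier G)"
    and "induced_regular G"
    and "x \<in> carrier G"
    and "maximal_centralizer G x"
    and "y \<in> centralizer G x - beta G x"
    and "Factorial_Ring.prime p" and "p \<noteq> 2"
    and "group.ord (G Mod center G) (center G #> y) = p"
  shows "elementary_p_group
           ((G Mod center G) \<lparr>carrier := (\<lambda>a. center G #> a) ` (beta G x \<union> center G)\<rparr>) p"
proof -
  interpret group G by fact
  interpret Z: normal "center G" G by (rule normal_center)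
  have y: "y \<in> carrier G" "y \<in> centralizer G x" "y \<notin> beta G x"
    using assms(6) centralizer_subset_carrier by auto
  have "y [^] p \<in> center G"
    using Z.pow_ord_FactGroup_mem[OF y(1)] assms(9) by simp
  moreover have "y \<notin> center G"
    using Z.ord_FactGroup_eq_1_iff[OF y(1)] assms(7,9) not_prime_1 by auto
  moreover have "odd p"
    using prime_ge_2_nat[OF assms(7)] assms(8) by (intro prime_odd_nat[OF assms(7)]) simp
  ultimately have "\<And>a. a \<in> beta G x \<union> center G \<Longrightarrow> a [^] p \<in> center G"
    using pow_mem_center_if_induced_regular[OF assms(2,3,5) y(2)] y(3) by blast
  then show ?thesis
    using Z.elementary_p_group_FactGroup_image[OF subgroup_beta_Un_center[OF assms(5)] assms(7)] by blast
qed

end
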